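(* Let $\mathbf{PtdCat}$ be the category of pointed categories and $\mathbf{TPtdCat}$ its full subcategory of terminally pointed categories, and let $\iota:\mathbf{TPtdCat}\hookrightarrow\mathbf{PtdCat}$ be the inclusion. Then $\iota$ has a right adjoint $G:\mathbf{PtdCat}\to\mathbf{TPtdCat}$, given on objects by $G(A,\mathcal C)=(1_A,\mathcal C/A)$ and on a morphism $(F,\alpha):(A,\mathcal C)\to(B,\mathcal D)$ by $G(F,\alpha)=(\Sigma_\alpha\circ F/A,\ \alpha)$. More precisely, for every pointed category $(A,\mathcal C)$ the morphism $(\Sigma_A,1_A):(1_A,\mathcal C/A)\to(A,\mathcal C)$ is universal from $\iota$ to $(A,\mathcal C)$: for every terminally pointed category $(1,\mathcal D)$ and every morphism $(F,\alpha):(1,\mathcal D)\to(A,\mathcal C)$ there is a unique morphism $(\overline F,\overline\alpha):(1,\mathcal D)\to(1_A,\mathcal C/A)$ with $(\Sigma_A,1_A)\circ(\overline F,\overline\alpha)=(F,\alpha)$.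
   Context: A pointed category is a pair $(A,\mathcal C)$ with $\mathcal C$ a non-empty category and $A$ an object of $\mathcal C$. A morphism of pointed categories $(A,\mathcal C)\to(B,\mathcal D)$ is a pair $(F,\alpha)$ with $F:\mathcal C\to\mathcal D$ a functor and $\alpha:FA\to B$ a morphism of $\mathcal D$. Composition: $(G,\beta)\circ(F,\alpha)=(GF,\ \beta\circ G\alpha)$; identities are $(1_{\mathcal C},1_A)$. This gives the category $\mathbf{PtdCat}$. A terminally pointed category is a pointed category $(1,\mathcal C)$ where $1$ is a chosen terminal object of $\mathcal C$; these span the full subcategory $\mathbf{TPtdCat}$. For an object $A$ of $\mathcal C$, $\mathcal C/A$ is the slice category (objects: morphisms $x:X\to A$; morphisms $g:(x:X\to A)\to(y:Y\to A)$ with $yg=x$), with terminal object $1_A$. $\Sigma_A:\mathcal C/A\to\mathcal C$ is the forgetful functor. For $f:A\to B$ in $\mathcal C$, $\Sigma_f:\mathcal C/A\to\mathcal C/B$ sends $x$ to $fx$ and $g$ to $g$. For a functor $F:\mathcal C\to\mathcal D$, the slice functor $F/A:\mathcal C/A\to\mathcal D/FA$ sends $x:X\to A$ to $Fx$ and $g$ to $Fg$. *)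

theory Defs
  imports Main
begin

record ('o, 'a) cat =
  Obj  :: "'o set"
  Arr  :: "'a set"
  Dom  :: "'a \<Rightarrow> 'o"
  Cod  :: "'a \<Rightarrow> 'o"
  Id   :: "'o \<Rightarrow> 'a"
  Comp :: "'a \<Rightarrow> 'a \<Rightarrow> 'a"   (* Comp C g f = g \<circ> f *)

definition is_category :: "('o, 'a) cat \<Rightarrow> bool" where
  "is_category C \<longleftrightarrow>
     (\<forall>f\<in>Arr C. Dom C f \<in> Obj C \<and> Cod C f \<in> Obj C) \<and>
     (\<forall>X\<in>Obj C. Id C X \<in> Arr C \<and> Dom C (Id C X) = X \<and> Cod C (Id C X) = X) \<and>
     (\<forall>f\<in>Arr C. \<forall>g\<in>Arr C. Cod C f = Dom C g \<longrightarrow>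
         Comp C g f \<in> Arr C \<and> Dom C (Comp C g f) = Dom C f \<and> Cod C (Comp C g f) = Cod C g) \<and>
     (\<forall>f\<in>Arr C. Comp C (Id C (Cod C f)) f = f \<and> Comp C f (Id C (Dom C f)) = f) \<and>
     (\<forall>f\<in>Arr C. \<forall>g\<in>Arr C. \<forall>h\<in>Arr C. Cod C f = Dom C g \<longrightarrow> Cod C g = Dom C h \<longrightarrow>
         Comp C h (Comp C g f) = Comp C (Comp C h g) f)"

definition is_terminal :: "('o, 'a) cat \<Rightarrow> 'o \<Rightarrow> bool" where
  "is_terminal C T \<longleftrightarrow> T \<in> Obj C \<and>
     (\<forall>X\<in>Obj C. \<exists>!f. f \<in> Arr C \<and> Dom C f = X \<and> Cod C f = T)"

record ('o, 'a, 'p, 'b) ftor =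
  FObj :: "'o \<Rightarrow> 'p"
  FArr :: "'a \<Rightarrow> 'b"

definition is_functor :: "('o, 'a) cat \<Rightarrow> ('p, 'b) cat \<Rightarrow> ('o, 'a, 'p, 'b) ftor \<Rightarrow> bool" where
  "is_functor C D F \<longleftrightarrow>
     (\<forall>X\<in>Obj C. FObj F X \<in> Obj D) \<and>
     (\<forall>f\<in>Arr C. FArr F f \<in> Arr D \<and> Dom D (FArr F f) = FObj F (Dom C f)
                                     \<and> Cod D (FArr F f) = FObj F (Cod C f)) \<and>
     (\<forall>X\<in>Obj C. FArr F (Id C X) = Id D (FObj F X)) \<and>
     (\<forall>f\<in>Arr C. \<forall>g\<in>Arr C. Cod C f = Dom C g \<longrightarrow>
         FArr F (Comp C g f) = Comp D (FArr F g) (FArr F f)) \<and>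
     (\<forall>X. X \<notin> Obj C \<longrightarrow> FObj F X = undefined) \<and>
     (\<forall>f. f \<notin> Arr C \<longrightarrow> FArr F f = undefined)"

definition fcomp :: "('o, 'a) cat \<Rightarrow> ('p, 'b, 'q, 'c) ftor \<Rightarrow> ('o, 'a, 'p, 'b) ftor
                     \<Rightarrow> ('o, 'a, 'q, 'c) ftor" where
  "fcomp C G F = \<lparr> FObj = (\<lambda>X. if X \<in> Obj C then FObj G (FObj F X) else undefined),
                   FArr = (\<lambda>f. if f \<in> Arr C then FArr G (FArr F f) else undefined) \<rparr>"

definition is_ptd_cat :: "'o \<Rightarrow> ('o, 'a) cat \<Rightarrow> bool" where
  "is_ptd_cat A C \<longleftrightarrow> is_category C \<and> Obj C \<noteq> {} \<and> A \<in> Obj C"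

definition is_tptd_cat :: "'o \<Rightarrow> ('o, 'a) cat \<Rightarrow> bool" where
  "is_tptd_cat T C \<longleftrightarrow> is_ptd_cat T C \<and> is_terminal C T"

definition ptd_hom :: "'o \<Rightarrow> ('o, 'a) cat \<Rightarrow> 'p \<Rightarrow> ('p, 'b) cat
                       \<Rightarrow> ('o, 'a, 'p, 'b) ftor \<times> 'b \<Rightarrow> bool" where
  "ptd_hom A C B D Fa \<longleftrightarrow> is_ptd_cat A C \<and> is_ptd_cat B D \<and>
     is_functor C D (fst Fa) \<and> snd Fa \<in> Arr D \<and>
     Dom D (snd Fa) = FObj (fst Fa) A \<and> Cod D (snd Fa) = B"

definition ptd_comp :: "('o, 'a) cat \<Rightarrow> ('q, 'c) cat \<Rightarrow> ('p, 'b, 'q, 'c) ftor \<times> 'c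
                        \<Rightarrow> ('o, 'a, 'p, 'b) ftor \<times> 'b \<Rightarrow> ('o, 'a, 'q, 'c) ftor \<times> 'c" where
  "ptd_comp C E Gb Fa = (fcomp C (fst Gb) (fst Fa), Comp E (snd Gb) (FArr (fst Gb) (snd Fa)))"

text \<open>A morphism \<open>g : x \<rightarrow> y\<close> is represented as the
  triple \<open>(x, g, y)\<close> with \<open>y \<circ> g = x\<close>.\<close>
definition slice :: "('o, 'a) cat \<Rightarrow> 'o \<Rightarrow> ('a, 'a \<times> 'a \<times> 'a) cat" where
  "slice C A = \<lparr>
     Obj = {x \<in> Arr C. Cod C x = A},
     Arr = {(x, g, y). x \<in> Arr C \<and> Cod C x = A \<and> y \<in> Arr C \<and> Cod C y = A \<and>
                       g \<in> Arr C \<and> Dom C g = Dom C x \<and> Cod C g = Dom C y \<and> Comp C y g = x},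
     Dom = (\<lambda>(x, g, y). x),
     Cod = (\<lambda>(x, g, y). y),
     Id = (\<lambda>x. (x, Id C (Dom C x), x)),
     Comp = (\<lambda>(y, h, z) (x, g, y'). (x, Comp C h g, z)) \<rparr>"

definition Sigma_fun :: "('o, 'a) cat \<Rightarrow> 'o \<Rightarrow> ('a, 'a \<times> 'a \<times> 'a, 'o, 'a) ftor" where
  "Sigma_fun C A = \<lparr> FObj = (\<lambda>x. if x \<in> Obj (slice C A) then Dom C x else undefined),
                     FArr = (\<lambda>t. if t \<in> Arr (slice C A) then fst (snd t) else undefined) \<rparr>"

end

theory Submission imports Defs begin

(* Every object X of a terminally pointed category (1, D) has a unique arrow !X : X -> 1.
   A morphism (F, alpha) : (1, D) -> (A, C) therefore lifts to the functor D -> C/A sending X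
   to alpha o F(!X) and f to F f, which is an arrow of C/A because !Y o f = !X. Conversely, a
   functor G : D -> C/A is determined by Sigma_A o G and the object G 1, since the image of !X
   forces G X = G 1 o F(!X). The point morphism of a lift is an arrow G 1 -> 1_A of C/A, and the
   only such arrow out of x is x itself; composing with (Sigma_A, 1_A) must return alpha, so
   G 1 = alpha. *)

lemma
  assumes "is_category C"
  shows cat_Dom_in_Obj: "f \<in> Arr C \<Longrightarrow> Dom C f \<in> Obj C"
    and cat_Cod_in_Obj: "f \<in> Arr C \<Longrightarrow> Cod C f \<in> Obj C"
    and cat_Id_in_Arr: "X \<in> Obj C \<Longrightarrow> Id C X \<in> Arr C"
    and cat_Dom_Id: "X \<in> Obj C \<Longrightarrow> Dom C (Id C X) = X"
    and cat_Cod_Id: "X \<in> Obj C \<Longrightarrow> Cod C (Id C X) = X"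
    and cat_Comp_in_Arr: "\<lbrakk>f \<in> Arr C; g \<in> Arr C; Cod C f = Dom C g\<rbrakk> \<Longrightarrow> Comp C g f \<in> Arr C"
    and cat_Dom_Comp: "\<lbrakk>f \<in> Arr C; g \<in> Arr C; Cod C f = Dom C g\<rbrakk> \<Longrightarrow> Dom C (Comp C g f) = Dom C f"
    and cat_Cod_Comp: "\<lbrakk>f \<in> Arr C; g \<in> Arr C; Cod C f = Dom C g\<rbrakk> \<Longrightarrow> Cod C (Comp C g f) = Cod C g"
    and cat_Comp_Id_left: "f \<in> Arr C \<Longrightarrow> Comp C (Id C (Cod C f)) f = f"
    and cat_Comp_Id_right: "f \<in> Arr C \<Longrightarrow> Comp C f (Id C (Dom C f)) = f"
    and cat_Comp_assoc: "\<lbrakk>f \<in> Arr C; g \<in> Arr C; h \<in> Arr C; Cod C f = Dom C g; Cod C g = Dom C h\<rbrakk>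
                         \<Longrightarrow> Comp C h (Comp C g f) = Comp C (Comp C h g) f"
  using assms unfolding is_category_def by blast+

lemma
  assumes "is_functor C D F"
  shows functor_FArr_in_Arr: "f \<in> Arr C \<Longrightarrow> FArr F f \<in> Arr D"
    and functor_Dom_FArr: "f \<in> Arr C \<Longrightarrow> Dom D (FArr F f) = FObj F (Dom C f)"
    and functor_Cod_FArr: "f \<in> Arr C \<Longrightarrow> Cod D (FArr F f) = FObj F (Cod C f)"
    and functor_FArr_Id: "X \<in> Obj C \<Longrightarrow> FArr F (Id C X) = Id D (FObj F X)"
    and functor_FArr_Comp: "\<lbrakk>f \<in> Arr C; g \<in> Arr C; Cod C f = Dom C g\<rbrakk>
                            \<Longrightarrow> FArr F (Comp C g f) = Comp D (FArr F g) (FArr F f)"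
    and functor_FObj_undefined: "X \<notin> Obj C \<Longrightarrow> FObj F X = undefined"
    and functor_FArr_undefined: "f \<notin> Arr C \<Longrightarrow> FArr F f = undefined"
  using assms unfolding is_functor_def by blast+

lemma functor_eqI:
  assumes "is_functor C D F" "is_functor C D G"
    and "\<And>X. X \<in> Obj C \<Longrightarrow> FObj F X = FObj G X"
    and "\<And>f. f \<in> Arr C \<Longrightarrow> FArr F f = FArr G f"
  shows "F = G"
proof (rule ftor.equality)
  show "FObj F = FObj G"
    using assms by (intro ext) (metis functor_FObj_undefined)
  show "FArr F = FArr G"
    using assms by (intro ext) (metis functor_FArr_undefined)
qed simp

lemma fcomp_eq_functorI:
  assumes "is_functor C E H"
    and "\<And>X. X \<in> Obj C \<Longrightarrow> FObj G (FObj F X) = FObj H X"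
    and "\<And>f. f \<in> Arr C \<Longrightarrow> FArr G (FArr F f) = FArr H f"
  shows "fcomp C G F = H"
proof (rule ftor.equality)
  show "FObj (fcomp C G F) = FObj H"
    using assms by (auto simp: fcomp_def functor_FObj_undefined)
  show "FArr (fcomp C G F) = FArr H"
    using assms by (auto simp: fcomp_def functor_FArr_undefined)
qed (simp add: fcomp_def)

lemma FArr_fcomp: "f \<in> Arr C \<Longrightarrow> FArr (fcomp C G F) f = FArr G (FArr F f)"
  by (simp add: fcomp_def)

definition terminal_arrow :: "('o, 'a) cat \<Rightarrow> 'o \<Rightarrow> 'o \<Rightarrow> 'a" where
  "terminal_arrow D T X = (THE f. f \<in> Arr D \<and> Dom D f = X \<and> Cod D f = T)"

context
  fixes D :: "('o, 'a) cat" and T :: 'o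
  assumes terminal: "is_terminal D T"
begin

lemma terminal_arrow:
  assumes "X \<in> Obj D"
  shows "terminal_arrow D T X \<in> Arr D" "Dom D (terminal_arrow D T X) = X"
    "Cod D (terminal_arrow D T X) = T"
  using theI'[of "\<lambda>f. f \<in> Arr D \<and> Dom D f = X \<and> Cod D f = T"] terminal assms
  unfolding terminal_arrow_def is_terminal_def by auto

lemma terminal_arrow_unique:
  assumes "f \<in> Arr D" "Cod D f = T" "Dom D f \<in> Obj D"
  shows "f = terminal_arrow D T (Dom D f)"
  using the1_equality[of "\<lambda>g. g \<in> Arr D \<and> Dom D g = Dom D f \<and> Cod D g = T" f] terminal assms
  unfolding terminal_arrow_def is_terminal_def by auto

lemma terminal_arrow_self:
  assumes "is_category D"
  shows "terminal_arrow D T T = Id D T"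
  using terminal_arrow_unique[of "Id D T"] terminal assms
  by (simp add: is_terminal_def cat_Id_in_Arr cat_Dom_Id cat_Cod_Id)

lemma terminal_arrow_Comp:
  assumes "is_category D" "f \<in> Arr D"
  shows "Comp D (terminal_arrow D T (Cod D f)) f = terminal_arrow D T (Dom D f)"
  using assms terminal_arrow[of "Cod D f"]
    terminal_arrow_unique[of "Comp D (terminal_arrow D T (Cod D f)) f"]
  by (simp add: cat_Dom_in_Obj cat_Cod_in_Obj cat_Comp_in_Arr cat_Dom_Comp cat_Cod_Comp)

end

lemma Obj_slice: "Obj (slice C A) = {x \<in> Arr C. Cod C x = A}"
  and Arr_slice: "(x, g, y) \<in> Arr (slice C A) \<longleftrightarrow>
     x \<in> Arr C \<and> Cod C x = A \<and> y \<in> Arr C \<and> Cod C y = A \<and>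
     g \<in> Arr C \<and> Dom C g = Dom C x \<and> Cod C g = Dom C y \<and> Comp C y g = x"
  and Dom_slice: "Dom (slice C A) (x, g, y) = x"
  and Cod_slice: "Cod (slice C A) (x, g, y) = y"
  and Id_slice: "Id (slice C A) x = (x, Id C (Dom C x), x)"
  and Comp_slice: "Comp (slice C A) (y, h, z) (x, g, y') = (x, Comp C h g, z)"
  by (auto simp: slice_def)

lemmas slice_simps = Obj_slice Arr_slice Dom_slice Cod_slice Id_slice Comp_slice

lemma Ball_Arr_slice:
  "(\<forall>t\<in>Arr (slice C A). P t) \<longleftrightarrow> (\<forall>x g y. (x, g, y) \<in> Arr (slice C A) \<longrightarrow> P (x, g, y))"
  by auto

lemma slice_arrD:
  assumes "(x, g, y) \<in> Arr (slice C A)"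
  shows "x \<in> Obj (slice C A)" "y \<in> Obj (slice C A)" "g \<in> Arr C"
    "Dom C x = Dom C g" "Dom C y = Cod C g"
  using assms by (simp_all add: Arr_slice Obj_slice)

lemma Id_slice_in_Arr:
  assumes C: "is_category C" and "x \<in> Obj (slice C A)"
  shows "(x, Id C (Dom C x), x) \<in> Arr (slice C A)"
  using assms by (simp add: Obj_slice Arr_slice cat_Dom_in_Obj cat_Id_in_Arr cat_Dom_Id cat_Cod_Id
      cat_Comp_Id_right)

lemma Comp_slice_in_Arr:
  assumes C: "is_category C"
    and xgy: "(x, g, y) \<in> Arr (slice C A)" and yhz: "(y, h, z) \<in> Arr (slice C A)"
  shows "(x, Comp C h g, z) \<in> Arr (slice C A)"
proof -
  have "Comp C z (Comp C h g) = Comp C (Comp C z h) g"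
    using xgy yhz by (simp add: Arr_slice cat_Comp_assoc[OF C])
  also have "\<dots> = x"
    using xgy yhz by (simp add: Arr_slice)
  finally show ?thesis
    using xgy yhz
    by (simp add: Arr_slice cat_Comp_in_Arr[OF C] cat_Dom_Comp[OF C] cat_Cod_Comp[OF C])
qed

lemma is_category_slice:
  assumes C: "is_category C"
  shows "is_category (slice C A)"
  unfolding is_category_def Ball_Arr_slice
  using C by (auto dest: slice_arrD intro: Comp_slice_in_Arr Id_slice_in_Arr
      simp: Dom_slice Cod_slice Id_slice Comp_slice)
    (metis slice_arrD(3,5) cat_Comp_Id_left, metis slice_arrD(3,4) cat_Comp_Id_right,
      metis slice_arrD(3-5) cat_Comp_assoc)

lemma Arr_slice_into_Id_iff:
  assumes C: "is_category C" and A: "A \<in> Obj C"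
  shows "(x, g, Id C A) \<in> Arr (slice C A) \<longleftrightarrow> x \<in> Arr C \<and> Cod C x = A \<and> g = x"
proof
  assume "(x, g, Id C A) \<in> Arr (slice C A)"
  then have x: "x \<in> Arr C" "Cod C x = A"
    and g: "g \<in> Arr C" "Cod C g = A" "Comp C (Id C A) g = x"
    unfolding Arr_slice cat_Dom_Id[OF C A] by blast+
  have "g = x"
    using cat_Comp_Id_left[OF C g(1), unfolded g(2)] g(3) by (rule trans[OF sym])
  with x show "x \<in> Arr C \<and> Cod C x = A \<and> g = x"
    by blast
next
  assume "x \<in> Arr C \<and> Cod C x = A \<and> g = x"
  then have x: "x \<in> Arr C" "Cod C x = A" and "g = x"
    by blast+
  have "Comp C (Id C A) x = x"
    using cat_Comp_Id_left[OF C x(1)] unfolding x(2) .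
  then show "(x, g, Id C A) \<in> Arr (slice C A)"
    unfolding Arr_slice cat_Dom_Id[OF C A] cat_Cod_Id[OF C A] \<open>g = x\<close>
    using x cat_Id_in_Arr[OF C A] by blast
qed

lemma is_terminal_slice_Id:
  assumes "is_category C" "A \<in> Obj C"
  shows "is_terminal (slice C A) (Id C A)"
  unfolding is_terminal_def
proof (intro conjI ballI)
  show "Id C A \<in> Obj (slice C A)"
    using assms by (simp add: Obj_slice cat_Id_in_Arr cat_Cod_Id)
  fix x
  assume "x \<in> Obj (slice C A)"
  then have "(x, x, Id C A) \<in> Arr (slice C A)"
    using assms by (simp add: Obj_slice Arr_slice_into_Id_iff)
  moreover have "t = (x, x, Id C A)"
    if "t \<in> Arr (slice C A)" "Dom (slice C A) t = x" "Cod (slice C A) t = Id C A" for t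
    using that assms by (cases t) (simp add: Dom_slice Cod_slice Arr_slice_into_Id_iff)
  ultimately show "\<exists>!t. t \<in> Arr (slice C A) \<and> Dom (slice C A) t = x \<and> Cod (slice C A) t = Id C A"
    by (metis Dom_slice Cod_slice)
qed

lemma is_tptd_cat_slice:
  assumes "is_ptd_cat A C"
  shows "is_tptd_cat (Id C A) (slice C A)"
proof -
  have "is_category (slice C A)" and terminal: "is_terminal (slice C A) (Id C A)"
    using assms by (simp_all add: is_ptd_cat_def is_category_slice is_terminal_slice_Id)
  moreover have "Id C A \<in> Obj (slice C A)"
    using terminal unfolding is_terminal_def by (rule conjunct1)
  ultimately show ?thesis
    unfolding is_tptd_cat_def is_ptd_cat_def by blast
qed

lemma FObj_Sigma_fun: "x \<in> Obj (slice C A) \<Longrightarrow> FObj (Sigma_fun C A) x = Dom C x"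
  and FArr_Sigma_fun: "(x, g, y) \<in> Arr (slice C A) \<Longrightarrow> FArr (Sigma_fun C A) (x, g, y) = g"
  by (simp_all add: Sigma_fun_def)

lemma Comp_Cod_FArr_Sigma_fun:
  "t \<in> Arr (slice C A) \<Longrightarrow>
    Comp C (Cod (slice C A) t) (FArr (Sigma_fun C A) t) = Dom (slice C A) t"
  by (cases t) (simp add: slice_simps FArr_Sigma_fun)

lemma is_functor_Sigma_fun:
  assumes C: "is_category C"
  shows "is_functor (slice C A) C (Sigma_fun C A)"
  unfolding is_functor_def Ball_Arr_slice
  using C by (auto dest: slice_arrD intro: Comp_slice_in_Arr Id_slice_in_Arr
      simp: Sigma_fun_def Dom_slice Cod_slice Comp_slice Id_slice Obj_slice cat_Dom_in_Obj)

lemma ptd_hom_Sigma_fun: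
  assumes "is_ptd_cat A C"
  shows "ptd_hom (Id C A) (slice C A) A C (Sigma_fun C A, Id C A)"
  using assms is_tptd_cat_slice[OF assms]
  by (auto simp: ptd_hom_def is_functor_Sigma_fun is_tptd_cat_def is_ptd_cat_def Obj_slice
      FObj_Sigma_fun cat_Id_in_Arr cat_Dom_Id cat_Cod_Id)

lemma slice_arr_eqI:
  assumes "t \<in> Arr (slice C A)" "t' \<in> Arr (slice C A)"
    and "Dom (slice C A) t = Dom (slice C A) t'" "Cod (slice C A) t = Cod (slice C A) t'"
    and "FArr (Sigma_fun C A) t = FArr (Sigma_fun C A) t'"
  shows "t = t'"
  using assms by (cases t rule: prod_cases3; cases t' rule: prod_cases3)
    (simp add: Dom_slice Cod_slice FArr_Sigma_fun)

lemma slice_functor_eqI: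
  assumes C: "is_category C" and D: "is_category D" and T: "is_terminal D T"
    and G: "is_functor D (slice C A) G" and G': "is_functor D (slice C A) G'"
    and Sigma: "fcomp D (Sigma_fun C A) G = fcomp D (Sigma_fun C A) G'"
    and at_T: "FObj G T = FObj G' T"
  shows "G = G'"
proof -
  have Sigma_FArr: "FArr (Sigma_fun C A) (FArr G f) = FArr (Sigma_fun C A) (FArr G' f)"
    if "f \<in> Arr D" for f
    using arg_cong[OF Sigma, of "\<lambda>H. FArr H f"] that by (simp add: FArr_fcomp)
  have FObj_eq: "FObj G X = FObj G' X" if X: "X \<in> Obj D" for X
  proof -
    let ?t = "terminal_arrow D T X"
    have t: "?t \<in> Arr D" "Dom D ?t = X" "Cod D ?t = T"
      using terminal_arrow[OF T X] by auto
    have "FObj G X = Comp C (FObj G T) (FArr (Sigma_fun C A) (FArr G ?t))"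
      using Comp_Cod_FArr_Sigma_fun[OF functor_FArr_in_Arr[OF G t(1)]]
      by (simp add: t functor_Dom_FArr[OF G] functor_Cod_FArr[OF G])
    also have "\<dots> = FObj G' X"
      using Comp_Cod_FArr_Sigma_fun[OF functor_FArr_in_Arr[OF G' t(1)]]
      by (simp add: t at_T Sigma_FArr functor_Dom_FArr[OF G'] functor_Cod_FArr[OF G'])
    finally show ?thesis .
  qed
  have FArr_eq: "FArr G f = FArr G' f" if f: "f \<in> Arr D" for f
    using f D by (intro slice_arr_eqI[where C = C and A = A])
      (simp_all add: Sigma_FArr FObj_eq cat_Dom_in_Obj cat_Cod_in_Obj functor_FArr_in_Arr[OF G]
        functor_FArr_in_Arr[OF G'] functor_Dom_FArr[OF G] functor_Dom_FArr[OF G']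
        functor_Cod_FArr[OF G] functor_Cod_FArr[OF G'])
  show ?thesis
    using G G' FObj_eq FArr_eq by (rule functor_eqI)
qed

subsection \<open>The lift of a morphism out of a terminally pointed category\<close>

definition slice_lift_obj :: "('p, 'b) cat \<Rightarrow> 'p \<Rightarrow> ('p, 'b, 'o, 'a) ftor \<Rightarrow> ('o, 'a) cat
                              \<Rightarrow> 'a \<Rightarrow> 'p \<Rightarrow> 'a" where
  "slice_lift_obj D T F C \<alpha> X = Comp C \<alpha> (FArr F (terminal_arrow D T X))"

definition slice_lift :: "('p, 'b) cat \<Rightarrow> 'p \<Rightarrow> ('p, 'b, 'o, 'a) ftor \<Rightarrow> ('o, 'a) cat
                          \<Rightarrow> 'a \<Rightarrow> ('p, 'b, 'a, 'a \<times> 'a \<times> 'a) ftor" where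
  "slice_lift D T F C \<alpha> =
     \<lparr> FObj = (\<lambda>X. if X \<in> Obj D then slice_lift_obj D T F C \<alpha> X else undefined),
       FArr = (\<lambda>f. if f \<in> Arr D
                   then (slice_lift_obj D T F C \<alpha> (Dom D f), FArr F f,
                         slice_lift_obj D T F C \<alpha> (Cod D f))
                   else undefined) \<rparr>"

context
  fixes C :: "('o, 'a) cat" and A :: 'o and D :: "('p, 'b) cat" and T :: 'p
    and F :: "('p, 'b, 'o, 'a) ftor" and \<alpha> :: 'a
  assumes T: "is_tptd_cat T D" and F\<alpha>: "ptd_hom T D A C (F, \<alpha>)"
begin

private lemma
  shows C: "is_category C" and A: "A \<in> Obj C" and ptd_C: "is_ptd_cat A C"
    and D: "is_category D" and terminal: "is_terminal D T" and T_Obj: "T \<in> Obj D"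
    and F: "is_functor D C F" and \<alpha>: "\<alpha> \<in> Arr C" "Dom C \<alpha> = FObj F T" "Cod C \<alpha> = A"
  using T F\<alpha> by (auto simp: is_tptd_cat_def is_ptd_cat_def ptd_hom_def)

private abbreviation "lift_obj \<equiv> slice_lift_obj D T F C \<alpha>"

lemma slice_lift_obj_in_Obj:
  assumes "X \<in> Obj D"
  shows "lift_obj X \<in> Obj (slice C A)" "Dom C (lift_obj X) = FObj F X"
  using assms terminal_arrow[OF terminal assms] \<alpha>
  by (simp_all add: slice_lift_obj_def Obj_slice cat_Comp_in_Arr[OF C] cat_Cod_Comp[OF C]
      cat_Dom_Comp[OF C] functor_FArr_in_Arr[OF F] functor_Dom_FArr[OF F] functor_Cod_FArr[OF F])

lemma slice_lift_obj_terminal: "lift_obj T = \<alpha>"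
proof -
  have "lift_obj T = Comp C \<alpha> (Id C (Dom C \<alpha>))"
    using \<alpha> T_Obj by (simp add: slice_lift_obj_def terminal_arrow_self[OF terminal D]
        functor_FArr_Id[OF F])
  also have "\<dots> = \<alpha>"
    by (rule cat_Comp_Id_right[OF C \<alpha>(1)])
  finally show ?thesis .
qed

lemma slice_lift_obj_Comp:
  assumes f: "f \<in> Arr D"
  shows "Comp C (lift_obj (Cod D f)) (FArr F f) = lift_obj (Dom D f)"
proof -
  let ?t = "terminal_arrow D T (Cod D f)"
  have t: "?t \<in> Arr D" "Dom D ?t = Cod D f" "Cod D ?t = T"
    using terminal_arrow[OF terminal cat_Cod_in_Obj[OF D f]] by auto
  have "Comp C (lift_obj (Cod D f)) (FArr F f) = Comp C \<alpha> (Comp C (FArr F ?t) (FArr F f))"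
    using f t \<alpha> by (simp add: slice_lift_obj_def cat_Comp_assoc[OF C] functor_FArr_in_Arr[OF F]
        functor_Dom_FArr[OF F] functor_Cod_FArr[OF F])
  also have "\<dots> = Comp C \<alpha> (FArr F (Comp D ?t f))"
    using f t by (simp add: functor_FArr_Comp[OF F])
  also have "\<dots> = lift_obj (Dom D f)"
    using f by (simp add: slice_lift_obj_def terminal_arrow_Comp[OF terminal D])
  finally show ?thesis .
qed

lemma slice_lift_arr_in_Arr:
  assumes f: "f \<in> Arr D"
  shows "(lift_obj (Dom D f), FArr F f, lift_obj (Cod D f)) \<in> Arr (slice C A)"
  using f slice_lift_obj_in_Obj[OF cat_Dom_in_Obj[OF D f]]
    slice_lift_obj_in_Obj[OF cat_Cod_in_Obj[OF D f]] slice_lift_obj_Comp[OF f]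
  by (simp add: slice_simps functor_FArr_in_Arr[OF F] functor_Dom_FArr[OF F] functor_Cod_FArr[OF F])

lemma FObj_slice_lift: "X \<in> Obj D \<Longrightarrow> FObj (slice_lift D T F C \<alpha>) X = lift_obj X"
  and FArr_slice_lift: "f \<in> Arr D \<Longrightarrow>
    FArr (slice_lift D T F C \<alpha>) f = (lift_obj (Dom D f), FArr F f, lift_obj (Cod D f))"
  by (simp_all add: slice_lift_def)

lemma FObj_slice_lift_terminal: "FObj (slice_lift D T F C \<alpha>) T = \<alpha>"
  using T_Obj by (simp add: FObj_slice_lift slice_lift_obj_terminal)

lemma is_functor_slice_lift: "is_functor D (slice C A) (slice_lift D T F C \<alpha>)"
  unfolding is_functor_def
proof (intro conjI ballI impI allI)
  fix X
  assume "X \<in> Obj D"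
  then show "FArr (slice_lift D T F C \<alpha>) (Id D X) = Id (slice C A) (FObj (slice_lift D T F C \<alpha>) X)"
    by (simp add: FObj_slice_lift FArr_slice_lift Id_slice cat_Id_in_Arr[OF D] cat_Dom_Id[OF D]
        cat_Cod_Id[OF D] functor_FArr_Id[OF F] slice_lift_obj_in_Obj)
next
  fix f g
  assume "f \<in> Arr D" "g \<in> Arr D" "Cod D f = Dom D g"
  then show "FArr (slice_lift D T F C \<alpha>) (Comp D g f)
      = Comp (slice C A) (FArr (slice_lift D T F C \<alpha>) g) (FArr (slice_lift D T F C \<alpha>) f)"
    by (simp add: FArr_slice_lift Comp_slice cat_Comp_in_Arr[OF D] cat_Dom_Comp[OF D]
        cat_Cod_Comp[OF D] functor_FArr_Comp[OF F])
qed (auto simp: FObj_slice_lift FArr_slice_lift slice_lift_obj_in_Obj slice_lift_arr_in_Arr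
       Dom_slice Cod_slice cat_Dom_in_Obj[OF D] cat_Cod_in_Obj[OF D], simp_all add: slice_lift_def)

lemma ptd_hom_slice_lift:
  "ptd_hom T D (Id C A) (slice C A) (slice_lift D T F C \<alpha>, (\<alpha>, \<alpha>, Id C A))"
  unfolding ptd_hom_def fst_conv snd_conv
proof (intro conjI)
  show "is_ptd_cat T D"
    using T by (simp add: is_tptd_cat_def)
  show "is_ptd_cat (Id C A) (slice C A)"
    using is_tptd_cat_slice[OF ptd_C] by (simp add: is_tptd_cat_def)
  show "(\<alpha>, \<alpha>, Id C A) \<in> Arr (slice C A)"
    using \<alpha> by (simp add: Arr_slice_into_Id_iff[OF C A])
  show "Dom (slice C A) (\<alpha>, \<alpha>, Id C A) = FObj (slice_lift D T F C \<alpha>) T"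
    by (simp add: Dom_slice FObj_slice_lift_terminal)
qed (simp_all add: is_functor_slice_lift Cod_slice)

lemma fcomp_Sigma_fun_slice_lift: "fcomp D (Sigma_fun C A) (slice_lift D T F C \<alpha>) = F"
  using F
proof (rule fcomp_eq_functorI)
  fix X
  assume "X \<in> Obj D"
  then show "FObj (Sigma_fun C A) (FObj (slice_lift D T F C \<alpha>) X) = FObj F X"
    by (simp add: FObj_slice_lift FObj_Sigma_fun slice_lift_obj_in_Obj)
next
  fix f
  assume "f \<in> Arr D"
  then show "FArr (Sigma_fun C A) (FArr (slice_lift D T F C \<alpha>) f) = FArr F f"
    by (simp add: FArr_slice_lift FArr_Sigma_fun slice_lift_arr_in_Arr)
qed

lemma ptd_comp_Sigma_fun_slice_lift:
  "ptd_comp D C (Sigma_fun C A, Id C A) (slice_lift D T F C \<alpha>, (\<alpha>, \<alpha>, Id C A)) = (F, \<alpha>)"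
  using \<alpha>
  by (simp add: ptd_comp_def fcomp_Sigma_fun_slice_lift FArr_Sigma_fun Arr_slice_into_Id_iff[OF C A]
      cat_Comp_Id_left[OF C \<alpha>(1), unfolded \<alpha>(3)])

lemma slice_lift_unique:
  assumes hom: "ptd_hom T D (Id C A) (slice C A) Fa"
    and comp: "ptd_comp D C (Sigma_fun C A, Id C A) Fa = (F, \<alpha>)"
  shows "Fa = (slice_lift D T F C \<alpha>, (\<alpha>, \<alpha>, Id C A))"
proof -
  obtain G x g y where Fa: "Fa = (G, (x, g, y))"
    by (cases Fa rule: prod_cases4)
  have G: "is_functor D (slice C A) G" and "(x, g, y) \<in> Arr (slice C A)"
    and "Dom (slice C A) (x, g, y) = FObj G T" and "Cod (slice C A) (x, g, y) = Id C A"
    using hom unfolding Fa ptd_hom_def fst_conv snd_conv by blast+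
  then have point_arr: "(x, g, Id C A) \<in> Arr (slice C A)" and G_T: "FObj G T = x"
    and "y = Id C A"
    unfolding Dom_slice Cod_slice by simp_all
  then have "g = x" and x: "x \<in> Arr C" "Cod C x = A"
    by (simp_all add: Arr_slice_into_Id_iff[OF C A])
  have Sigma_G: "fcomp D (Sigma_fun C A) G = F" and "Comp C (Id C A) g = \<alpha>"
    using comp point_arr by (simp_all add: ptd_comp_def Fa \<open>y = Id C A\<close> FArr_Sigma_fun)
  have "x = \<alpha>"
  proof -
    have "x = Comp C (Id C A) x"
      using cat_Comp_Id_left[OF C x(1)] by (simp add: x(2))
    also have "\<dots> = \<alpha>"
      using \<open>Comp C (Id C A) g = \<alpha>\<close> by (simp only: \<open>g = x\<close>)
    finally show ?thesis .
  qed
  have "G = slice_lift D T F C \<alpha>"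
  proof (rule slice_functor_eqI[OF C D terminal])
    show "is_functor D (slice C A) G"
      by (rule G)
    show "fcomp D (Sigma_fun C A) G = fcomp D (Sigma_fun C A) (slice_lift D T F C \<alpha>)"
      by (simp only: Sigma_G fcomp_Sigma_fun_slice_lift)
    show "FObj G T = FObj (slice_lift D T F C \<alpha>) T"
      by (simp only: G_T \<open>x = \<alpha>\<close> FObj_slice_lift_terminal)
  qed (rule is_functor_slice_lift)
  then show ?thesis
    by (simp only: Fa \<open>y = Id C A\<close> \<open>g = x\<close> \<open>x = \<alpha>\<close>)
qed

end

theorem mainTheorem1:
  fixes C :: "('o, 'a) cat" and A :: 'o
    and D :: "('p, 'b) cat" and T :: 'p
    and F :: "('p, 'b, 'o, 'a) ftor" and \<alpha> :: 'a
  assumes "is_ptd_cat A C"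
    and "is_tptd_cat T D"
    and "ptd_hom T D A C (F, \<alpha>)"
  shows "is_tptd_cat (Id C A) (slice C A)
     \<and> ptd_hom (Id C A) (slice C A) A C (Sigma_fun C A, Id C A)
     \<and> (\<exists>!Fa. ptd_hom T D (Id C A) (slice C A) Fa
              \<and> ptd_comp D C (Sigma_fun C A, Id C A) Fa = (F, \<alpha>))"
proof (intro conjI)
  show "is_tptd_cat (Id C A) (slice C A)"
    using assms(1) by (rule is_tptd_cat_slice)
  show "ptd_hom (Id C A) (slice C A) A C (Sigma_fun C A, Id C A)"
    using assms(1) by (rule ptd_hom_Sigma_fun)
  show "\<exists>!Fa. ptd_hom T D (Id C A) (slice C A) Fa
              \<and> ptd_comp D C (Sigma_fun C A, Id C A) Fa = (F, \<alpha>)"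
  proof (rule ex1I)
    show "ptd_hom T D (Id C A) (slice C A) (slice_lift D T F C \<alpha>, (\<alpha>, \<alpha>, Id C A))
        \<and> ptd_comp D C (Sigma_fun C A, Id C A) (slice_lift D T F C \<alpha>, (\<alpha>, \<alpha>, Id C A)) = (F, \<alpha>)"
      using ptd_hom_slice_lift[OF assms(2,3)] ptd_comp_Sigma_fun_slice_lift[OF assms(2,3)] ..
  next
    fix Fa
    assume Fa: "ptd_hom T D (Id C A) (slice C A) Fa
      \<and> ptd_comp D C (Sigma_fun C A, Id C A) Fa = (F, \<alpha>)"
    show "Fa = (slice_lift D T F C \<alpha>, (\<alpha>, \<alpha>, Id C A))"
      using slice_lift_unique[OF assms(2,3) conjunct1[OF Fa] conjunct2[OF Fa]] .
  qed
qed

end
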